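(* The number of equilibria in $\Delta$ is finite.
   Context: Let $N\ge3$, $\alpha>1$, and $A_{i,j}=1-\delta_{i,j}$ for $i,j\le N$. Let $\Delta=\{v\in\mathbb R_+^N:\sum_iv_i=1,\ v_i\le3/4\ \forall i\}$. For $v\in\Delta$ let $v^\alpha=(v_i^\alpha)_i$, $H(v)=\sum_{i\neq j}v_i^\alpha v_j^\alpha$, $\pi_i(v)=v_i^\alpha(Av^\alpha)_i/H(v)$, and $F(v)=-v+\pi(v)$. An equilibrium is $v\in\Delta$ with $F(v)=0$. *)

theory Defs
  imports "HOL-Analysis.Analysis"
begin

text \<open>Vectors in R^N are indexed by a finite type 'n with CARD('n) = N.
  A is the matrix with entries 1 - delta_ij.\<close>

definition Amat :: "real^'n^'n" where
  "Amat = (\<chi> i j. if i = j then 0 else 1)"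

definition Simplex :: "(real^'n) set" where
  "Simplex = {v. (\<forall>i. 0 \<le> v $ i) \<and> (\<Sum>i\<in>UNIV. v $ i) = 1 \<and> (\<forall>i. v $ i \<le> 3/4)}"

definition vpow :: "real \<Rightarrow> real^'n \<Rightarrow> real^'n" where
  "vpow \<alpha> v = (\<chi> i. (v $ i) powr \<alpha>)"

definition Hfun :: "real \<Rightarrow> real^'n \<Rightarrow> real" where
  "Hfun \<alpha> v = (\<Sum>i\<in>UNIV. \<Sum>j\<in>UNIV. if i \<noteq> j then (v $ i) powr \<alpha> * (v $ j) powr \<alpha> else 0)"

definition pifun :: "real \<Rightarrow> real^'n \<Rightarrow> real^'n" where
  "pifun \<alpha> v = (\<chi> i. (vpow \<alpha> v $ i) * ((Amat *v vpow \<alpha> v) $ i) / Hfun \<alpha> v)"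

definition Ffun :: "real \<Rightarrow> real^'n \<Rightarrow> real^'n" where
  "Ffun \<alpha> v = - v + pifun \<alpha> v"

definition equilibria :: "real \<Rightarrow> (real^'n) set" where
  "equilibria \<alpha> = {v \<in> Simplex. Ffun \<alpha> v = 0}"

end

theory Submission
  imports Defs
begin

text \<open>At an equilibrium every positive coordinate x satisfies H(v) = g(x) with
  g(x) = s x^(\<alpha>-1) - x^(2\<alpha>-1) and s = \<Sum> v_j^\<alpha>. Since g' has a single positive zero, g takes
  each value at most twice, so the positive coordinates take at most two values: the maximum on a
  set A and a smaller one on a set B. Their ratio t is a positive root of an explicit function
  psi depending only on |A| and |B|, and psi has finitely many positive roots because its second
  derivative has at most one (unless psi' is constant). The equilibrium is determined by (A, B, t), which ranges over a finite
  set.\<close>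

lemma level_set_bound_by_critical_points:
  fixes f f' :: "real \<Rightarrow> real" and S :: "real set"
  assumes S: "is_interval S"
    and deriv: "\<And>x. x \<in> S \<Longrightarrow> (f has_real_derivative f' x) (at x)"
    and fin: "finite {x\<in>S. f' x = 0}"
  shows "finite {x\<in>S. f x = c}" and "card {x\<in>S. f x = c} \<le> Suc (card {x\<in>S. f' x = 0})"
proof -
  define D where "D = {x\<in>S. f' x = 0}"
  define Z where "Z = {x\<in>S. f x = c}"
  define below where "below z = card {d\<in>D. d < z}" for z
  \<comment> \<open>by Rolle, a critical point lies between any two level points, so \<open>below\<close> is injective on them\<close>
  have critical_between: "\<exists>d\<in>D. z < d \<and> d < z'" if zs: "z \<in> Z" "z' \<in> Z" "z < z'" for z z'
  proof -
    have sub: "{z..z'} \<subseteq> S"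
      using S zs unfolding Z_def is_interval_1 by auto
    have "continuous_on {z..z'} f"
      using sub by (intro continuous_at_imp_continuous_on ballI DERIV_isCont[OF deriv]) auto
    moreover have "f differentiable (at x)" if "z < x" "x < z'" for x
    proof -
      have "x \<in> S" using sub that by auto
      then show ?thesis using deriv real_differentiable_def by blast
    qed
    ultimately obtain d where d: "z < d" "d < z'" "DERIV f d :> 0"
      using Rolle[of z z' f] zs unfolding Z_def by auto
    then have "d \<in> S" using sub by auto
    then have "f' d = 0" using d(3) deriv DERIV_unique by metis
    then show ?thesis using d \<open>d \<in> S\<close> unfolding D_def by auto
  qed
  have finD: "finite D" using fin unfolding D_def .
  have below_mono: "below z < below z'" if zs: "z \<in> Z" "z' \<in> Z" "z < z'" for z z'
  proof -
    obtain d where d: "d \<in> D" "z < d" "d < z'" using critical_between[OF zs] by blast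
    have "{d\<in>D. d < z} \<subseteq> {d\<in>D. d < z'}" using \<open>z < z'\<close> by auto
    moreover have "d \<in> {d\<in>D. d < z'} - {d\<in>D. d < z}" using d by simp
    ultimately have "{d\<in>D. d < z} \<subset> {d\<in>D. d < z'}" by blast
    then show ?thesis unfolding below_def using finD by (simp add: psubset_card_mono)
  qed
  have inj: "inj_on below Z"
  proof (rule inj_onI)
    fix z z' assume "z \<in> Z" "z' \<in> Z" "below z = below z'"
    then show "z = z'" using below_mono[of z z'] below_mono[of z' z]
      by (cases z z' rule: linorder_cases) auto
  qed
  have range: "below ` Z \<subseteq> {..card D}"
    unfolding below_def using finD by (auto intro: card_mono)
  show "finite {x\<in>S. f x = c}"
    using finite_subset[OF range] inj_on_finite[OF inj range] unfolding Z_def by simp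
  have "card Z = card (below ` Z)" using card_image[OF inj] by simp
  also have "\<dots> \<le> Suc (card D)" using card_mono[OF _ range] by simp
  finally show "card {x\<in>S. f x = c} \<le> Suc (card {x\<in>S. f' x = 0})" unfolding Z_def D_def .
qed

lemma powr_equation_roots_subset:
  fixes p q r :: real
  assumes "p \<noteq> 0" "r \<noteq> 0"
  shows "{t\<in>{0<..}. p * t powr r = q} \<subseteq> {(q / p) powr (1 / r)}"
proof
  fix t assume t: "t \<in> {t\<in>{0<..}. p * t powr r = q}"
  then have "(q / p) powr (1 / r) = (t powr r) powr (1 / r)" using assms by auto
  also have "\<dots> = t" using t assms by (simp add: powr_powr)
  finally show "t \<in> {(q / p) powr (1 / r)}" by simp
qed

definition gfun :: "real \<Rightarrow> real \<Rightarrow> real \<Rightarrow> real" where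
  "gfun a s x = s * x powr (a - 1) - x powr (2 * a - 1)"

lemma gfun_pos_level_set:
  assumes "a > 1"
  shows "finite {x\<in>{0<..}. gfun a s x = c}" and "card {x\<in>{0<..}. gfun a s x = c} \<le> 2"
proof -
  define g' where "g' x = s * ((a - 1) * x powr (a - 2)) - (2 * a - 1) * x powr (2 * a - 2)" for x
  have deriv: "(gfun a s has_real_derivative g' x) (at x)" if "x \<in> {0<..}" for x
    using that has_real_derivative_powr[of x "a - 1"] has_real_derivative_powr[of x "2 * a - 1"]
    unfolding gfun_def g'_def by (auto intro!: derivative_eq_intros simp: algebra_simps)
  have key: "g' x * x powr (2 - a) = s * (a - 1) - (2 * a - 1) * x powr a" if "x > 0" for x
  proof -
    have "x powr (a - 2) * x powr (2 - a) = 1" "x powr (2 * a - 2) * x powr (2 - a) = x powr a"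
      using that by (simp_all add: powr_add[symmetric])
    then show ?thesis unfolding g'_def by (simp add: algebra_simps)
  qed
  have "{x\<in>{0<..}. g' x = 0} \<subseteq> {x\<in>{0<..}. (2 * a - 1) * x powr a = s * (a - 1)}"
  proof
    fix x assume "x \<in> {x\<in>{0<..}. g' x = 0}"
    then show "x \<in> {x\<in>{0<..}. (2 * a - 1) * x powr a = s * (a - 1)}"
      using key[of x] by simp
  qed
  also have "\<dots> \<subseteq> {(s * (a - 1) / (2 * a - 1)) powr (1 / a)}"
    using assms by (intro powr_equation_roots_subset) auto
  finally have crit_sub: "{x\<in>{0<..}. g' x = 0} \<subseteq> {(s * (a - 1) / (2 * a - 1)) powr (1 / a)}" .
  have crit: "finite {x\<in>{0<..}. g' x = 0}" "card {x\<in>{0<..}. g' x = 0} \<le> 1"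
    using finite_subset[OF crit_sub] card_mono[OF _ crit_sub] by simp_all
  show "finite {x\<in>{0<..}. gfun a s x = c}"
    using level_set_bound_by_critical_points(1)[OF is_interval_oi deriv crit(1)] by simp
  have "card {x\<in>{0<..}. gfun a s x = c} \<le> Suc (card {x\<in>{0<..}. g' x = 0})"
    using level_set_bound_by_critical_points(2)[OF is_interval_oi deriv crit(1)] by simp
  then show "card {x\<in>{0<..}. gfun a s x = c} \<le> 2"
    using crit(2) by linarith
qed

text \<open>Equating g at two levels t b and b, where s = k (t b)^\<alpha> + m b^\<alpha>, and dividing by
  b^(2\<alpha>-1) t^(\<alpha>-1) leaves psi t = 0.\<close>

definition psi :: "real \<Rightarrow> real \<Rightarrow> real \<Rightarrow> real \<Rightarrow> real" where
  "psi a k m t = (k - 1) * t powr a - k * t + m - (m - 1) * t powr (1 - a)"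

lemma finite_psi_roots:
  assumes "a > 1"
  shows "finite {t\<in>{0<..}. psi a k m t = 0}"
proof -
  define d1 where "d1 t = (k - 1) * (a * t powr (a - 1)) - k - (m - 1) * ((1 - a) * t powr (- a))" for t
  define d2 where "d2 t = (k - 1) * (a * ((a - 1) * t powr (a - 2)))
      - (m - 1) * ((1 - a) * (- a * t powr (- a - 1)))" for t
  have D1: "(psi a k m has_real_derivative d1 t) (at t)" if "t \<in> {0<..}" for t
    using that has_real_derivative_powr[of t a] has_real_derivative_powr[of t "1 - a"]
    unfolding psi_def d1_def by (auto intro!: derivative_eq_intros)
  have D2: "(d1 has_real_derivative d2 t) (at t)" if "t \<in> {0<..}" for t
    using that has_real_derivative_powr[of t "a - 1"] has_real_derivative_powr[of t "- a"]
    unfolding d1_def d2_def by (auto intro!: derivative_eq_intros simp: algebra_simps)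
  have "finite {t\<in>{0<..}. d1 t = 0}"
  proof (cases "k = 1 \<and> m = 1")
    case True
    \<comment> \<open>then psi' is the constant -1\<close>
    then show ?thesis unfolding d1_def by simp
  next
    case False
    have "d2 t * t powr (a + 1) = a * (a - 1) * ((k - 1) * t powr (2 * a - 1) - (m - 1))"
      if "t > 0" for t
    proof -
      have "t powr (a - 2) * t powr (a + 1) = t powr (2 * a - 1)" "t powr (- a - 1) * t powr (a + 1) = 1"
        using that by (simp_all add: powr_add[symmetric])
      then show ?thesis unfolding d2_def by (simp add: algebra_simps)
    qed
    then have "{t\<in>{0<..}. d2 t = 0} \<subseteq> {t\<in>{0<..}. (k - 1) * t powr (2 * a - 1) = m - 1}"
      using assms by force
    also have "\<dots> \<subseteq> {((m - 1) / (k - 1)) powr (1 / (2 * a - 1))}"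
    proof (cases "k = 1")
      case False
      then show ?thesis using assms powr_equation_roots_subset[of "k - 1" "2 * a - 1" "m - 1"] by simp
    qed (use False in auto)
    finally show ?thesis
      using level_set_bound_by_critical_points(1)[OF is_interval_oi D2] finite_subset by blast
  qed
  then show ?thesis
    using level_set_bound_by_critical_points(1)[OF is_interval_oi D1] by blast
qed

lemma psi_root_of_gfun_level:
  assumes "b > 0" "t > 0"
    and s: "s = k * (t * b) powr a + m * b powr a"
    and g: "gfun a s (t * b) = gfun a s b"
  shows "psi a k m t = 0"
proof -
  define P where "P = t powr (a - 1)"
  define Q where "Q = b powr (a - 1)"
  have P0: "P > 0" and Q0: "Q > 0" using assms by (auto simp: P_def Q_def)
  have split_a: "x powr a = x * x powr (a - 1)" if "x > 0" for x :: real
    using that powr_add[of x 1 "a - 1"] by simp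
  have split_2a: "x powr (2 * a - 1) = x * x powr (a - 1) * x powr (a - 1)" if "x > 0" for x :: real
    using that powr_add[of x "1 + (a - 1)" "a - 1"] powr_add[of x 1 "a - 1"]
    by (simp add: algebra_simps)
  have tb: "(t * b) powr c = t powr c * b powr c" for c
    using assms by (simp add: powr_mult)
  have "s = k * t * P * b * Q + m * b * Q"
    using s unfolding tb split_a[OF \<open>t > 0\<close>] split_a[OF \<open>b > 0\<close>] P_def Q_def by simp
  moreover have "gfun a s (t * b) = s * P * Q - t * P * P * b * Q * Q"
    unfolding gfun_def tb split_2a[OF \<open>t > 0\<close>] split_2a[OF \<open>b > 0\<close>] P_def Q_def
    by (simp add: algebra_simps)
  moreover have "gfun a s b = s * Q - b * Q * Q"
    unfolding gfun_def split_2a[OF \<open>b > 0\<close>] Q_def by (simp add: algebra_simps)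
  ultimately have "b * Q * Q * ((k * t * P + m) * P - t * P * P - (k * t * P + m - 1)) = 0"
    using g by (simp add: algebra_simps)
  then have root: "(k * t * P + m) * P - t * P * P - (k * t * P + m - 1) = 0"
    using Q0 \<open>b > 0\<close> by simp
  have "t powr (1 - a) = 1 / P"
    unfolding P_def using \<open>t > 0\<close> by (simp add: powr_minus_divide[symmetric])
  then have "psi a k m t * P = (k * t * P + m) * P - t * P * P - (k * t * P + m - 1)"
    unfolding psi_def split_a[OF \<open>t > 0\<close>] P_def[symmetric] using P0 by (simp add: field_simps)
  then show ?thesis using root P0 by simp
qed

lemma Amat_mult_vec_nth: "(Amat *v w) $ i = (\<Sum>j\<in>UNIV. w $ j) - w $ i"
proof -
  have "(Amat *v w) $ i = (\<Sum>j\<in>UNIV. w $ j - (if j = i then w $ j else 0))"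
    unfolding matrix_vector_mult_def Amat_def by (auto intro: sum.cong)
  then show ?thesis by (simp add: sum_subtractf)
qed

lemma equilibrium_gfun_level:
  fixes v :: "real^'n"
  assumes v: "v \<in> equilibria a" and pos: "v $ i > 0"
  shows "gfun a (\<Sum>j\<in>UNIV. v $ j powr a) (v $ i) = Hfun a v"
proof -
  define s where "s = (\<Sum>j\<in>UNIV. v $ j powr a)"
  define H where "H = Hfun a v"
  have "pifun a v = v" using v by (simp add: equilibria_def Ffun_def)
  then have fixed: "v $ j = v $ j powr a * (s - v $ j powr a) / H" for j
    unfolding vec_eq_iff by (simp add: pifun_def vpow_def Amat_mult_vec_nth s_def H_def)
  have "H \<noteq> 0"
  proof
    assume "H = 0"
    then have "v = 0" using fixed by (simp add: vec_eq_iff)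
    then show False using v by (simp add: equilibria_def Simplex_def)
  qed
  define x where "x = v $ i"
  have "x > 0" using pos x_def by simp
  have split: "x powr a = x * x powr (a - 1)" "x powr a * x powr a = x * x powr (2 * a - 1)"
    using \<open>x > 0\<close> powr_add[of x 1 "a - 1"] powr_add[of x a a] powr_add[of x 1 "2 * a - 1"]
    by (simp_all add: algebra_simps)
  have "x * H = x powr a * s - x powr a * x powr a"
    using fixed[of i] \<open>H \<noteq> 0\<close> unfolding x_def by (simp add: field_simps)
  also have "\<dots> = x * x powr (a - 1) * s - x * x powr (2 * a - 1)"
    by (simp only: split(1)[symmetric] split(2))
  finally have "x * H = x * (s * x powr (a - 1) - x powr (2 * a - 1))"
    by (simp add: algebra_simps)
  then show ?thesis
    using \<open>x > 0\<close> unfolding gfun_def s_def[symmetric] H_def[symmetric] x_def[symmetric] by simp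
qed

definition two_level_vec :: "'n set \<Rightarrow> 'n set \<Rightarrow> real \<Rightarrow> real \<Rightarrow> real^'n" where
  "two_level_vec A B p q = (\<chi> i. if i \<in> A then p else if i \<in> B then q else 0)"

lemma sum_two_level_vec:
  assumes "A \<inter> B = {}" "f 0 = 0"
  shows "(\<Sum>i\<in>UNIV. f (two_level_vec A B p q $ i)) = real (card A) * f p + real (card B) * f q"
proof -
  have "(\<Sum>i\<in>UNIV. f (two_level_vec A B p q $ i))
      = (\<Sum>i\<in>UNIV. (if i \<in> A then f p else 0) + (if i \<in> B then f q else 0))"
    using assms unfolding two_level_vec_def by (intro sum.cong) auto
  then show ?thesis by (simp add: sum.distrib sum.If_cases)
qed

lemma equilibrium_two_level_vec:
  fixes v :: "real^'n"
  assumes v: "v \<in> equilibria a" and a: "a > 1"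
  defines "s \<equiv> \<Sum>j\<in>UNIV. v $ j powr a"
  shows "\<exists>A B p q. A \<inter> B = {} \<and> 0 < p \<and> 0 < q \<and> gfun a s p = gfun a s q
    \<and> v = two_level_vec A B p q"
proof -
  have nonneg: "v $ i \<ge> 0" for i
    using v by (auto simp: equilibria_def Simplex_def)
  have sum1: "(\<Sum>i\<in>UNIV. v $ i) = 1"
    using v by (auto simp: equilibria_def Simplex_def)
  define L where "L = {x\<in>{0<..}. gfun a s x = Hfun a v}"
  have in_L: "v $ i \<in> L" if "v $ i > 0" for i
    using equilibrium_gfun_level[OF v that] that unfolding L_def s_def by simp
  define p where "p = Max (range (\<lambda>i. v $ i))"
  have le_p: "v $ i \<le> p" for i unfolding p_def by (intro Max_ge) auto
  have "p \<in> range (\<lambda>i. v $ i)" unfolding p_def by (intro Max_in) auto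
  then obtain i0 where "v $ i0 = p" by auto
  have "p > 0"
  proof (rule ccontr)
    assume "\<not> p > 0"
    then have "v $ i = 0" for i using le_p[of i] nonneg[of i] by linarith
    then show False using sum1 by simp
  qed
  then have "p \<in> L" using in_L \<open>v $ i0 = p\<close> by metis
  define A where "A = {i. v $ i = p}"
  define B where "B = {i. 0 < v $ i \<and> v $ i < p}"
  \<comment> \<open>if there is a single positive level, take q = p; then t = 1, which is a root of psi for m = 0\<close>
  define q where "q = (if B = {} then p else v $ (SOME j. j \<in> B))"
  have "q > 0 \<and> q \<in> L \<and> (B \<noteq> {} \<longrightarrow> q < p)"
  proof (cases "B = {}")
    case False
    then have "(SOME j. j \<in> B) \<in> B" by (simp add: some_in_eq)
    then show ?thesis using in_L False unfolding q_def B_def by auto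
  qed (use \<open>p > 0\<close> \<open>p \<in> L\<close> q_def in auto)
  then have q: "q > 0" "q \<in> L" "B \<noteq> {} \<Longrightarrow> q < p" by auto
  have B_level: "v $ i = q" if "i \<in> B" for i
  proof (rule ccontr)
    assume "v $ i \<noteq> q"
    moreover have "v $ i < p" "q < p" using that q(3) unfolding B_def by auto
    ultimately have "card {p, q, v $ i} = 3" by auto
    moreover have "{p, q, v $ i} \<subseteq> L"
      using in_L \<open>p \<in> L\<close> q(2) that unfolding B_def by auto
    then have "card {p, q, v $ i} \<le> card L"
      using gfun_pos_level_set(1)[OF a] unfolding L_def by (intro card_mono) auto
    moreover have "card L \<le> 2" using gfun_pos_level_set(2)[OF a] unfolding L_def .
    ultimately show False by linarith
  qed
  have "v $ i = two_level_vec A B p q $ i" for i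
  proof -
    have "v $ i = p \<or> v $ i = 0 \<or> (0 < v $ i \<and> v $ i < p)"
      using le_p[of i] nonneg[of i] by linarith
    then consider "i \<in> A" | "v $ i = 0" "i \<notin> A" "i \<notin> B" | "i \<in> B" "i \<notin> A"
      unfolding A_def B_def by auto
    then show ?thesis by cases (simp_all add: two_level_vec_def A_def B_level)
  qed
  then have "v = two_level_vec A B p q" by (simp add: vec_eq_iff)
  moreover have "gfun a s p = gfun a s q" using \<open>p \<in> L\<close> q(2) unfolding L_def by simp
  moreover have "A \<inter> B = {}" unfolding A_def B_def by auto
  ultimately show ?thesis using \<open>p > 0\<close> q(1) by blast
qed

lemma equilibrium_ratio_form:
  fixes v :: "real^'n"
  assumes v: "v \<in> equilibria a" and a: "a > 1"
  shows "\<exists>A B (t :: real). 0 < t \<and> psi a (card A) (card B) t = 0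
    \<and> v = two_level_vec A B (t / (card A * t + card B)) (1 / (card A * t + card B))"
proof -
  define s where "s = (\<Sum>j\<in>UNIV. v $ j powr a)"
  obtain A B p q where AB: "A \<inter> B = {}" and "0 < p" "0 < q" and g: "gfun a s p = gfun a s q"
    and v_eq: "v = two_level_vec A B p q"
    using equilibrium_two_level_vec[OF v a] unfolding s_def by blast
  define t where "t = p / q"
  have "0 < t" and p_eq: "p = t * q" using \<open>0 < p\<close> \<open>0 < q\<close> by (auto simp: t_def)
  have "s = card A * (t * q) powr a + card B * q powr a"
    unfolding s_def v_eq p_eq using sum_two_level_vec[OF AB, of "\<lambda>x. x powr a"] by simp
  then have "psi a (card A) (card B) t = 0"
    using psi_root_of_gfun_level[OF \<open>0 < q\<close> \<open>0 < t\<close>] g p_eq by simp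
  moreover have "card A * p + card B * q = 1"
    using v sum_two_level_vec[OF AB, of id] unfolding v_eq by (simp add: equilibria_def Simplex_def)
  then have denom: "(card A * t + card B) * q = 1"
    using p_eq by (simp add: algebra_simps)
  then have "card A * t + card B \<noteq> 0" by auto
  with denom have "q = 1 / (card A * t + card B)"
    by (simp add: field_simps)
  moreover from this have "p = t / (card A * t + card B)"
    using p_eq by simp
  ultimately show ?thesis using \<open>0 < t\<close> v_eq by metis
qed

theorem lemma4p6:
  fixes \<alpha> :: real
  assumes "CARD('n::finite) \<ge> 3" and "\<alpha> > 1"
  shows "finite (equilibria \<alpha> :: (real^'n) set)"
proof -
  define roots where "roots A B = {t\<in>{0<..}. psi \<alpha> (card A) (card B) t = 0}" for A B :: "'n set"
  let ?vec = "\<lambda>(A, B, t :: real). two_level_vec A B (t / (card A * t + card B)) (1 / (card A * t + card B))"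
  have "equilibria \<alpha> \<subseteq> ?vec ` (SIGMA A:UNIV. SIGMA B:UNIV. roots A B)"
  proof
    fix v :: "real^'n" assume "v \<in> equilibria \<alpha>"
    then obtain A B and t :: real where "t \<in> roots A B"
      and "v = two_level_vec A B (t / (card A * t + card B)) (1 / (card A * t + card B))"
      using equilibrium_ratio_form[OF _ assms(2)] unfolding roots_def by blast
    then show "v \<in> ?vec ` (SIGMA A:UNIV. SIGMA B:UNIV. roots A B)"
      by (intro image_eqI[of _ _ "(A, B, t)"]) auto
  qed
  moreover have "finite (SIGMA A:UNIV. SIGMA B:UNIV. roots A B)"
    using finite_psi_roots[OF assms(2)] unfolding roots_def by (intro finite_SigmaI) auto
  ultimately show ?thesis using finite_subset by blast
qed

end
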